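(* A connected graph $G$ is Ricci-flat and has girth $g(G)\ge 5$ if and only if $G$ is one of the following: the path $P_n$ ($n\ge 2$), the infinite ray, the infinite (two-sided) path, the cycle $C_n$ ($n\ge 5$), or the star graph $T_n$ ($n\ge 3$).
   Context: Graphs are locally finite and unweighted; the girth is the length of a shortest cycle (infinite for trees). $d_G$ is the shortest-path metric, $N_G(v)$ the neighbour set and $d_v$ the degree of $v$; $m_v$ is the uniform probability measure on $N_G(v)$, and for an edge $(x,y)$, $\kappa(x,y)=1-W_1(m_x,m_y)$, where $W_1$ is the Wasserstein-1 (transportation) distance with respect to $d_G$. $G$ is Ricci-flat if $\kappa(x,y)=0$ for every edge $(x,y)\in E(G)$. $P_n$ is the path on $n$ vertices, $C_n$ the cycle on $n$ vertices, and the star $T_n$ is a tree with one central vertex adjacent to all other vertices, which are leaves. *)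

theory Defs
  imports Complex_Main "HOL-Library.Extended_Nat"
begin

definition graph :: "'a set \<Rightarrow> ('a \<Rightarrow> 'a \<Rightarrow> bool) \<Rightarrow> bool" where
  "graph V E \<longleftrightarrow> (\<forall>x y. E x y \<longrightarrow> x \<in> V \<and> y \<in> V \<and> E y x \<and> x \<noteq> y)"

definition nbrs :: "('a \<Rightarrow> 'a \<Rightarrow> bool) \<Rightarrow> 'a \<Rightarrow> 'a set" where
  "nbrs E v = {u. E v u}"

definition locally_finite :: "'a set \<Rightarrow> ('a \<Rightarrow> 'a \<Rightarrow> bool) \<Rightarrow> bool" where
  "locally_finite V E \<longleftrightarrow> (\<forall>v\<in>V. finite (nbrs E v))"

definition walk :: "('a \<Rightarrow> 'a \<Rightarrow> bool) \<Rightarrow> 'a list \<Rightarrow> bool" where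
  "walk E xs \<longleftrightarrow> xs \<noteq> [] \<and> (\<forall>i. Suc i < length xs \<longrightarrow> E (xs ! i) (xs ! Suc i))"

definition connected_graph :: "'a set \<Rightarrow> ('a \<Rightarrow> 'a \<Rightarrow> bool) \<Rightarrow> bool" where
  "connected_graph V E \<longleftrightarrow> V \<noteq> {} \<and>
     (\<forall>u\<in>V. \<forall>v\<in>V. \<exists>xs. walk E xs \<and> hd xs = u \<and> last xs = v)"

definition gdist :: "('a \<Rightarrow> 'a \<Rightarrow> bool) \<Rightarrow> 'a \<Rightarrow> 'a \<Rightarrow> nat" where
  "gdist E u v = (LEAST n. \<exists>xs. walk E xs \<and> hd xs = u \<and> last xs = v \<and> length xs = Suc n)"

definition unif_nbr :: "('a \<Rightarrow> 'a \<Rightarrow> bool) \<Rightarrow> 'a \<Rightarrow> 'a \<Rightarrow> real" where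
  "unif_nbr E v u = (if E v u then 1 / real (card (nbrs E v)) else 0)"

definition coupling :: "('a \<Rightarrow> 'a \<Rightarrow> bool) \<Rightarrow> 'a \<Rightarrow> 'a \<Rightarrow> ('a \<Rightarrow> 'a \<Rightarrow> real) \<Rightarrow> bool" where
  "coupling E x y \<pi> \<longleftrightarrow>
     (\<forall>a b. \<pi> a b \<ge> 0) \<and>
     (\<forall>a b. \<pi> a b \<noteq> 0 \<longrightarrow> a \<in> nbrs E x \<and> b \<in> nbrs E y) \<and>
     (\<forall>a\<in>nbrs E x. (\<Sum>b\<in>nbrs E y. \<pi> a b) = unif_nbr E x a) \<and>
     (\<forall>b\<in>nbrs E y. (\<Sum>a\<in>nbrs E x. \<pi> a b) = unif_nbr E y b)"

definition W1 :: "('a \<Rightarrow> 'a \<Rightarrow> bool) \<Rightarrow> 'a \<Rightarrow> 'a \<Rightarrow> real" where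
  "W1 E x y = Inf {(\<Sum>a\<in>nbrs E x. \<Sum>b\<in>nbrs E y. \<pi> a b * real (gdist E a b)) | \<pi>. coupling E x y \<pi>}"

definition kappa :: "('a \<Rightarrow> 'a \<Rightarrow> bool) \<Rightarrow> 'a \<Rightarrow> 'a \<Rightarrow> real" where
  "kappa E x y = 1 - W1 E x y"

definition ricci_flat :: "'a set \<Rightarrow> ('a \<Rightarrow> 'a \<Rightarrow> bool) \<Rightarrow> bool" where
  "ricci_flat V E \<longleftrightarrow> (\<forall>x\<in>V. \<forall>y\<in>V. E x y \<longrightarrow> kappa E x y = 0)"

definition is_cycle :: "'a set \<Rightarrow> ('a \<Rightarrow> 'a \<Rightarrow> bool) \<Rightarrow> 'a list \<Rightarrow> bool" where
  "is_cycle V E xs \<longleftrightarrow> length xs \<ge> 3 \<and> distinct xs \<and> set xs \<subseteq> V \<and> walk E xs \<and> E (last xs) (hd xs)"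

text \<open>Girth: length of a shortest cycle; \<infinity> if there is none.\<close>
definition girth :: "'a set \<Rightarrow> ('a \<Rightarrow> 'a \<Rightarrow> bool) \<Rightarrow> enat" where
  "girth V E = Inf {enat (length xs) | xs. is_cycle V E xs}"

definition graph_iso :: "'a set \<Rightarrow> ('a \<Rightarrow> 'a \<Rightarrow> bool) \<Rightarrow> 'b set \<Rightarrow> ('b \<Rightarrow> 'b \<Rightarrow> bool) \<Rightarrow> bool" where
  "graph_iso V E W F \<longleftrightarrow> (\<exists>f. bij_betw f V W \<and> (\<forall>x\<in>V. \<forall>y\<in>V. E x y \<longleftrightarrow> F (f x) (f y)))"

definition path_E :: "nat \<Rightarrow> nat \<Rightarrow> nat \<Rightarrow> bool" where
  "path_E n i j \<longleftrightarrow> i < n \<and> j < n \<and> (j = i + 1 \<or> i = j + 1)"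

definition ray_E :: "nat \<Rightarrow> nat \<Rightarrow> bool" where
  "ray_E i j \<longleftrightarrow> (j = i + 1 \<or> i = j + 1)"

definition line_E :: "int \<Rightarrow> int \<Rightarrow> bool" where
  "line_E i j \<longleftrightarrow> (j = i + 1 \<or> i = j + 1)"

definition cycle_E :: "nat \<Rightarrow> nat \<Rightarrow> nat \<Rightarrow> bool" where
  "cycle_E n i j \<longleftrightarrow> i < n \<and> j < n \<and> i \<noteq> j \<and> (j = (i + 1) mod n \<or> i = (j + 1) mod n)"

text \<open>Star T_n: centre 0, leaves 1..n-1.\<close>
definition star_E :: "nat \<Rightarrow> nat \<Rightarrow> nat \<Rightarrow> bool" where
  "star_E n i j \<longleftrightarrow> i < n \<and> j < n \<and> i \<noteq> j \<and> (i = 0 \<or> j = 0)"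

end

theory Submission
  imports Defs
begin

text \<open>
  Let \<open>xy\<close> be an edge of a graph without 3- and 4-cycles. Then \<open>N(x)\<close> and \<open>N(y)\<close> are disjoint
  and no edge joins \<open>N(x) - {y}\<close> to \<open>N(y) - {x}\<close>. If \<open>x\<close> or \<open>y\<close> is a leaf, or both have degree
  two, some transport plan moves all mass along single edges, so \<open>W\<^sub>1(m\<^sub>x, m\<^sub>y) = 1\<close>; otherwise a
  1-Lipschitz potential gives \<open>W\<^sub>1 \<ge> 2 - 1/d\<^sub>x - 1/d\<^sub>y > 1\<close>. Hence such a graph is Ricci-flat iff
  every edge has a leaf as an endpoint or two endpoints of degree two. In a connected graph
  of this kind a vertex of degree \<open>\<ge> 3\<close> makes the graph a star; otherwise all degrees are at
  most two, and following non-backtracking walks from a leaf, or in both directions from any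
  vertex, exhibits a path, a ray, a cycle (of length \<open>\<ge> 5\<close>, by the girth) or the two-sided line.
\<close>

lemma in_nbrs_iff [simp]: "u \<in> nbrs E v \<longleftrightarrow> E v u"
  by (simp add: nbrs_def)

lemma graphD:
  assumes "graph V E" "E x y"
  shows "x \<in> V" "y \<in> V" "E y x" "x \<noteq> y"
  using assms unfolding graph_def by blast+

lemma card_1_eq_singleton: "card A = 1 \<Longrightarrow> a \<in> A \<Longrightarrow> A = {a}"
  by (metis card_1_singletonE singletonD)

lemma leaf_nbrs:
  "card (nbrs E x) = 1 \<Longrightarrow> E x y \<Longrightarrow> nbrs E x = {y}"
  by (simp add: card_1_eq_singleton)

lemma card_2_member:
  assumes "card A = 2" "y \<in> A"
  shows "\<exists>a. A = {y, a} \<and> a \<noteq> y"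
proof -
  obtain u v where "A = {u, v}" "u \<noteq> v"
    using assms(1) card_2_iff by metis
  then show ?thesis
    using assms(2) by (metis insert_commute insertE singletonD)
qed

lemma card_2_has_other: "card A = 2 \<Longrightarrow> \<exists>w\<in>A. w \<noteq> z"
  by (metis card_2_iff insert_iff)

lemma card_2_eq_pair:
  assumes "card A = 2" "a \<in> A" "b \<in> A" "a \<noteq> b"
  shows "A = {a, b}"
  using card_2_member[OF assms(1,2)] assms(3,4) by auto

subsection \<open>Walks and the graph distance\<close>

lemma walk_singleton [simp]: "walk E [a]"
  by (simp add: walk_def)

lemma walk_Cons_Cons [simp]: "walk E (a # b # xs) \<longleftrightarrow> E a b \<and> walk E (b # xs)"
proof
  assume w: "walk E (a # b # xs)"
  have "E a b"
    using w unfolding walk_def by (metis length_Cons nth_Cons_0 nth_Cons_Suc zero_less_Suc Suc_less_eq)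
  moreover have "walk E (b # xs)"
    unfolding walk_def
  proof (intro conjI allI impI)
    fix i assume "Suc i < length (b # xs)"
    then show "E ((b # xs) ! i) ((b # xs) ! Suc i)"
      using w[unfolded walk_def] by (metis Suc_less_eq length_Cons nth_Cons_Suc)
  qed simp
  ultimately show "E a b \<and> walk E (b # xs)" ..
next
  assume ab: "E a b \<and> walk E (b # xs)"
  show "walk E (a # b # xs)"
    unfolding walk_def
  proof (intro conjI allI impI)
    fix i assume "Suc i < length (a # b # xs)"
    with ab show "E ((a # b # xs) ! i) ((a # b # xs) ! Suc i)"
      unfolding walk_def by (cases i) auto
  qed simp
qed

lemma gdist_le_1: "E a b \<Longrightarrow> gdist E a b \<le> 1"
  unfolding gdist_def by (rule Least_le) (rule exI[of _ "[a, b]"], simp)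

lemma shortest_walk_exists:
  assumes "walk E xs" "hd xs = a" "last xs = b"
  shows "\<exists>ys. walk E ys \<and> hd ys = a \<and> last ys = b \<and> length ys = Suc (gdist E a b)"
proof -
  have "length xs = Suc (length xs - 1)"
    using assms(1) by (simp add: walk_def)
  then have "\<exists>n ys. walk E ys \<and> hd ys = a \<and> last ys = b \<and> length ys = Suc n"
    using assms by blast
  then show ?thesis
    unfolding gdist_def by (rule LeastI_ex)
qed

lemma gdist_ge_1:
  assumes "walk E xs" "hd xs = a" "last xs = b" "a \<noteq> b"
  shows "1 \<le> gdist E a b"
proof (rule ccontr)
  assume "\<not> 1 \<le> gdist E a b"
  then obtain ys where "walk E ys" "hd ys = a" "last ys = b" "length ys = 1"
    using shortest_walk_exists[OF assms(1-3)] by auto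
  then show False
    using assms(4) by (auto simp: length_Suc_conv)
qed

lemma gdist_ge_2:
  assumes "walk E xs" "hd xs = a" "last xs = b" "a \<noteq> b" "\<not> E a b"
  shows "2 \<le> gdist E a b"
proof (rule ccontr)
  assume "\<not> 2 \<le> gdist E a b"
  then have "gdist E a b = 1"
    using gdist_ge_1[OF assms(1-4)] by simp
  then obtain ys where "walk E ys" "hd ys = a" "last ys = b" "length ys = 2"
    using shortest_walk_exists[OF assms(1-3)] by auto
  then show False
    using assms(5) by (auto simp: length_Suc_conv numeral_2_eq_2)
qed

subsection \<open>Transport plans and bounds on \<open>W1\<close>\<close>

lemma unif_nbr_in: "E v u \<Longrightarrow> unif_nbr E v u = 1 / real (card (nbrs E v))"
  by (simp add: unif_nbr_def)

lemma sum_unif_nbr: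
  assumes "finite (nbrs E v)" "nbrs E v \<noteq> {}"
  shows "(\<Sum>u\<in>nbrs E v. unif_nbr E v u) = 1"
  using assms by (simp add: unif_nbr_in)

definition transport_cost :: "('a \<Rightarrow> 'a \<Rightarrow> bool) \<Rightarrow> 'a \<Rightarrow> 'a \<Rightarrow> ('a \<Rightarrow> 'a \<Rightarrow> real) \<Rightarrow> real" where
  "transport_cost E x y \<pi> = (\<Sum>a\<in>nbrs E x. \<Sum>b\<in>nbrs E y. \<pi> a b * real (gdist E a b))"

lemma W1_eq_Inf_transport_cost: "W1 E x y = Inf (transport_cost E x y ` Collect (coupling E x y))"
  unfolding W1_def transport_cost_def by (rule arg_cong[where f = Inf]) auto

lemma W1_le_transport_cost:
  assumes "coupling E x y \<pi>"
  shows "W1 E x y \<le> transport_cost E x y \<pi>"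
proof -
  have "0 \<le> transport_cost E x y \<rho>" if "coupling E x y \<rho>" for \<rho>
    using that unfolding transport_cost_def coupling_def by (intro sum_nonneg mult_nonneg_nonneg) auto
  then show ?thesis
    unfolding W1_eq_Inf_transport_cost using assms by (intro cInf_lower bdd_belowI[of _ 0]) auto
qed

lemma coupling_product:
  assumes "finite (nbrs E x)" "nbrs E x \<noteq> {}" "finite (nbrs E y)" "nbrs E y \<noteq> {}"
  shows "coupling E x y (\<lambda>a b. unif_nbr E x a * unif_nbr E y b)"
  unfolding coupling_def using assms
  by (auto simp: unif_nbr_def sum_distrib_left[symmetric] sum_distrib_right[symmetric] sum_unif_nbr
           split: if_splits)

lemma coupling_matching:
  assumes fin: "finite (nbrs E x)" and bij: "bij_betw \<sigma> (nbrs E x) (nbrs E y)"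
  shows "coupling E x y (\<lambda>a b. if E x a \<and> b = \<sigma> a then 1 / real (card (nbrs E x)) else 0)"
    (is "coupling E x y ?\<pi>")
proof -
  have card_eq: "card (nbrs E x) = card (nbrs E y)"
    using bij by (rule bij_betw_same_card)
  have fin_y: "finite (nbrs E y)"
    using bij fin bij_betw_finite by blast
  have row: "(\<Sum>b\<in>nbrs E y. ?\<pi> a b) = unif_nbr E x a" if a: "E x a" for a
  proof -
    have "\<sigma> a \<in> nbrs E y"
      using bij a by (auto dest: bij_betwE)
    then show ?thesis
      using a fin_y by (simp add: unif_nbr_in)
  qed
  have col: "(\<Sum>a\<in>nbrs E x. ?\<pi> a b) = unif_nbr E y b" if b: "E y b" for b
  proof -
    obtain a where a: "a \<in> nbrs E x" "\<sigma> a = b"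
      using bij b unfolding bij_betw_def by force
    have "?\<pi> a' b = (if a' = a then 1 / real (card (nbrs E x)) else 0)" if "a' \<in> nbrs E x" for a'
      using bij a that unfolding bij_betw_def by (auto dest: inj_onD)
    then have "(\<Sum>a'\<in>nbrs E x. ?\<pi> a' b) = (\<Sum>a'\<in>nbrs E x. if a' = a then 1 / real (card (nbrs E x)) else 0)"
      by (rule sum.cong[OF refl])
    then show ?thesis
      using a b card_eq fin by (simp add: unif_nbr_in)
  qed
  show ?thesis
    unfolding coupling_def using row col bij by (auto dest: bij_betwE)
qed

lemma W1_le_1_if_coupling_adjacent:
  assumes \<pi>: "coupling E x y \<pi>" and fin: "finite (nbrs E x)" "nbrs E x \<noteq> {}"
    and adj: "\<And>a b. E x a \<Longrightarrow> E y b \<Longrightarrow> \<pi> a b \<noteq> 0 \<Longrightarrow> E a b"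
  shows "W1 E x y \<le> 1"
proof -
  have "W1 E x y \<le> transport_cost E x y \<pi>"
    using \<pi> by (rule W1_le_transport_cost)
  also have "\<dots> \<le> (\<Sum>a\<in>nbrs E x. \<Sum>b\<in>nbrs E y. \<pi> a b)"
    unfolding transport_cost_def
  proof (intro sum_mono)
    fix a b assume "a \<in> nbrs E x" "b \<in> nbrs E y"
    then have "\<pi> a b \<noteq> 0 \<Longrightarrow> real (gdist E a b) \<le> 1"
      using adj gdist_le_1 by (metis in_nbrs_iff of_nat_le_1_iff)
    moreover have "0 \<le> \<pi> a b"
      using \<pi> unfolding coupling_def by blast
    ultimately show "\<pi> a b * real (gdist E a b) \<le> \<pi> a b"
      by (cases "\<pi> a b = 0") (auto intro: mult_left_le)
  qed
  also have "\<dots> = (\<Sum>a\<in>nbrs E x. unif_nbr E x a)"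
    using \<pi> unfolding coupling_def by (intro sum.cong) auto
  also have "\<dots> = 1"
    using fin by (rule sum_unif_nbr)
  finally show ?thesis .
qed

text \<open>The easy half of Kantorovich duality.\<close>

lemma W1_ge_potential_difference:
  assumes fin: "finite (nbrs E x)" "nbrs E x \<noteq> {}" "finite (nbrs E y)" "nbrs E y \<noteq> {}"
    and dom: "\<And>a b. E x a \<Longrightarrow> E y b \<Longrightarrow> g b - h a \<le> real (gdist E a b)"
  shows "(\<Sum>b\<in>nbrs E y. g b) / card (nbrs E y) - (\<Sum>a\<in>nbrs E x. h a) / card (nbrs E x) \<le> W1 E x y"
  unfolding W1_eq_Inf_transport_cost
proof (rule cInf_greatest)
  show "transport_cost E x y ` Collect (coupling E x y) \<noteq> {}"
    using coupling_product[OF fin] by blast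
next
  fix c assume "c \<in> transport_cost E x y ` Collect (coupling E x y)"
  then obtain \<pi> where \<pi>: "coupling E x y \<pi>" and c: "c = transport_cost E x y \<pi>"
    by blast
  have "(\<Sum>a\<in>nbrs E x. \<Sum>b\<in>nbrs E y. \<pi> a b * (g b - h a)) \<le> c"
    using \<pi> unfolding c transport_cost_def coupling_def by (intro sum_mono mult_left_mono dom) auto
  moreover have "(\<Sum>a\<in>nbrs E x. \<Sum>b\<in>nbrs E y. \<pi> a b * (g b - h a))
     = (\<Sum>b\<in>nbrs E y. g b * (\<Sum>a\<in>nbrs E x. \<pi> a b)) - (\<Sum>a\<in>nbrs E x. h a * (\<Sum>b\<in>nbrs E y. \<pi> a b))"
    by (simp add: algebra_simps sum_subtractf sum_distrib_left sum_distrib_right sum.swap[of _ "nbrs E x"])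
  moreover have "(\<Sum>b\<in>nbrs E y. g b * (\<Sum>a\<in>nbrs E x. \<pi> a b)) = (\<Sum>b\<in>nbrs E y. g b) / card (nbrs E y)"
    and "(\<Sum>a\<in>nbrs E x. h a * (\<Sum>b\<in>nbrs E y. \<pi> a b)) = (\<Sum>a\<in>nbrs E x. h a) / card (nbrs E x)"
    using \<pi> unfolding coupling_def by (simp_all add: unif_nbr_in sum_divide_distrib)
  ultimately show "(\<Sum>b\<in>nbrs E y. g b) / card (nbrs E y) - (\<Sum>a\<in>nbrs E x. h a) / card (nbrs E x) \<le> c"
    by linarith
qed

lemma W1_ge_1_if_disjoint_nbrs:
  assumes "finite (nbrs E x)" "nbrs E x \<noteq> {}" "finite (nbrs E y)" "nbrs E y \<noteq> {}"
    and disj: "nbrs E x \<inter> nbrs E y = {}" and walks: "\<And>a b. E x a \<Longrightarrow> E y b \<Longrightarrow> walk E [a, x, y, b]"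
  shows "1 \<le> W1 E x y"
proof -
  have "(\<Sum>b\<in>nbrs E y. 1) / card (nbrs E y) - (\<Sum>a\<in>nbrs E x. 0) / card (nbrs E x) \<le> W1 E x y"
  proof (rule W1_ge_potential_difference[OF assms(1-4)])
    fix a b assume "E x a" "E y b"
    then have "1 \<le> gdist E a b"
      using disj walks by (intro gdist_ge_1[of E "[a, x, y, b]"]) auto
    then show "1 - 0 \<le> real (gdist E a b)"
      by simp
  qed
  then show ?thesis
    using assms(3,4) by simp
qed

subsection \<open>Curvature of an edge when there are no short cycles\<close>

definition triangle_free :: "('a \<Rightarrow> 'a \<Rightarrow> bool) \<Rightarrow> bool" where
  "triangle_free E \<longleftrightarrow> (\<forall>x y z. E x y \<longrightarrow> E y z \<longrightarrow> \<not> E z x)"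

definition quadrilateral_free :: "('a \<Rightarrow> 'a \<Rightarrow> bool) \<Rightarrow> bool" where
  "quadrilateral_free E \<longleftrightarrow> (\<forall>a b c d. E a b \<longrightarrow> E b c \<longrightarrow> E c d \<longrightarrow> E d a \<longrightarrow> a = c \<or> b = d)"

definition edges_leaf_or_deg2 :: "('a \<Rightarrow> 'a \<Rightarrow> bool) \<Rightarrow> bool" where
  "edges_leaf_or_deg2 E \<longleftrightarrow> (\<forall>x y. E x y \<longrightarrow> card (nbrs E x) = 1 \<or> card (nbrs E y) = 1 \<or>
       (card (nbrs E x) = 2 \<and> card (nbrs E y) = 2))"

locale lf_graph =
  fixes V :: "'a set" and E :: "'a \<Rightarrow> 'a \<Rightarrow> bool"
  assumes graph: "graph V E" and locally_finite: "locally_finite V E"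
    and no_isolated: "\<forall>v\<in>V. nbrs E v \<noteq> {}"
begin

lemma adj_sym: "E x y \<Longrightarrow> E y x"
  using graphD[OF graph] by blast

lemma adj_irrefl: "E x y \<Longrightarrow> x \<noteq> y"
  using graphD[OF graph] by blast

lemma adj_in_V: "E x y \<Longrightarrow> x \<in> V"
  using graphD[OF graph] by blast

lemma nbrs_subset_V: "nbrs E x \<subseteq> V"
  using graphD(2)[OF graph] by auto

lemma finite_nbrs: "x \<in> V \<Longrightarrow> finite (nbrs E x)"
  using locally_finite unfolding locally_finite_def by blast

lemma card_nbrs_ge_1: "x \<in> V \<Longrightarrow> 1 \<le> card (nbrs E x)"
  using finite_nbrs no_isolated by (simp add: Suc_le_eq card_gt_0_iff)

lemma nbrs_finite_nonempty:
  assumes "E x y"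
  shows "finite (nbrs E x)" "nbrs E x \<noteq> {}" "finite (nbrs E y)" "nbrs E y \<noteq> {}"
  using assms adj_sym adj_in_V finite_nbrs by fastforce+

lemma walk_across_edge: "E x y \<Longrightarrow> E x a \<Longrightarrow> E y b \<Longrightarrow> walk E [a, x, y, b]"
  using adj_sym by simp

lemma W1_eq_1_if_leaf:
  assumes xy: "E x y" and leaf: "card (nbrs E x) = 1 \<or> card (nbrs E y) = 1"
  shows "W1 E x y = 1"
proof -
  have leaf': "nbrs E x = {y} \<or> nbrs E y = {x}"
    using leaf xy adj_sym by (metis card_1_singletonE in_nbrs_iff singletonD)
  have "W1 E x y \<le> 1"
  proof (rule W1_le_1_if_coupling_adjacent[OF coupling_product])
    fix a b assume "E x a" "E y b" "unif_nbr E x a * unif_nbr E y b \<noteq> 0"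
    then have "a = y \<or> b = x"
      using leaf' by (metis in_nbrs_iff singletonD)
    then show "E a b"
      using \<open>E x a\<close> \<open>E y b\<close> adj_sym by auto
  qed (use nbrs_finite_nonempty[OF xy] in auto)
  moreover have "1 \<le> W1 E x y"
    using leaf'
    by (intro W1_ge_1_if_disjoint_nbrs nbrs_finite_nonempty[OF xy] walk_across_edge[OF xy])
      (auto dest: adj_irrefl)
  ultimately show ?thesis
    by simp
qed

lemma nbrs_disjoint_if_triangle_free:
  "triangle_free E \<Longrightarrow> E x y \<Longrightarrow> nbrs E x \<inter> nbrs E y = {}"
  unfolding triangle_free_def by (metis adj_sym disjoint_iff in_nbrs_iff)

lemma W1_eq_1_if_deg2:
  assumes xy: "E x y" and tf: "triangle_free E"
    and deg: "card (nbrs E x) = 2" "card (nbrs E y) = 2"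
  shows "W1 E x y = 1"
proof -
  obtain a where Nx: "nbrs E x = {y, a}" "a \<noteq> y"
    using card_2_member[OF deg(1)] xy by auto
  obtain b where Ny: "nbrs E y = {x, b}" "b \<noteq> x"
    using card_2_member[OF deg(2)] adj_sym[OF xy] by auto
  define \<sigma> where "\<sigma> u = (if u = y then b else x)" for u
  have "bij_betw \<sigma> (nbrs E x) (nbrs E y)"
    using Nx Ny by (auto simp: \<sigma>_def bij_betw_def)
  then have "W1 E x y \<le> 1"
  proof (rule W1_le_1_if_coupling_adjacent[OF coupling_matching[OF nbrs_finite_nonempty(1)[OF xy]]])
    fix u v assume "E x u" "E y v"
      "(if E x u \<and> v = \<sigma> u then 1 / real (card (nbrs E x)) else 0) \<noteq> 0"
    then show "E u v"
      using Nx Ny adj_sym by (auto simp: \<sigma>_def split: if_splits)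
  qed (use nbrs_finite_nonempty[OF xy] in auto)
  moreover have "1 \<le> W1 E x y"
    by (intro W1_ge_1_if_disjoint_nbrs nbrs_finite_nonempty[OF xy] walk_across_edge[OF xy]
        nbrs_disjoint_if_triangle_free[OF tf xy])
  ultimately show ?thesis
    by simp
qed

lemma gdist_ge_2_across_edge:
  assumes xy: "E x y" and u: "E x u" "u \<noteq> y" and v: "E y v" "v \<noteq> x"
    and tf: "triangle_free E" and qf: "quadrilateral_free E"
  shows "2 \<le> gdist E u v"
proof (rule gdist_ge_2)
  show "walk E [u, x, y, v]"
    using xy u v by (intro walk_across_edge)
  show "u \<noteq> v"
    using nbrs_disjoint_if_triangle_free[OF tf xy] u v by auto
  show "\<not> E u v"
    using qf u v xy adj_sym unfolding quadrilateral_free_def by metis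
qed simp_all

text \<open>The potential is \<open>1\<close> at \<open>x\<close> and \<open>2\<close> on the rest of \<open>N(y)\<close> against \<open>1\<close> at \<open>y\<close> and \<open>0\<close> on
  the rest of \<open>N(x)\<close>.\<close>

lemma W1_ge_2_minus_inverse_degrees:
  assumes xy: "E x y" and tf: "triangle_free E" and qf: "quadrilateral_free E"
  shows "2 - 1 / card (nbrs E y) - 1 / card (nbrs E x) \<le> W1 E x y"
proof -
  define g where "g v = (if v = x then 1 else 2::real)" for v
  define h where "h u = (if u = y then 1 else 0::real)" for u
  have dual: "(\<Sum>v\<in>nbrs E y. g v) / card (nbrs E y) - (\<Sum>u\<in>nbrs E x. h u) / card (nbrs E x) \<le> W1 E x y"
  proof (rule W1_ge_potential_difference[OF nbrs_finite_nonempty[OF xy]])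
    fix u v assume u: "E x u" and v: "E y v"
    show "g v - h u \<le> real (gdist E u v)"
    proof (cases "u = y \<or> v = x")
      case True
      have "u = v \<Longrightarrow> u = y \<and> v = x"
        using True u v by (auto dest: adj_irrefl)
      then have "\<not> (u = y \<and> v = x) \<Longrightarrow> 1 \<le> gdist E u v"
        using walk_across_edge[OF xy u v] by (intro gdist_ge_1[of E "[u, x, y, v]"]) auto
      then show ?thesis
        using True by (auto simp: g_def h_def)
    next
      case False
      then show ?thesis
        using gdist_ge_2_across_edge[OF xy u _ v _ tf qf] by (simp add: g_def h_def)
    qed
  qed
  have fin: "finite (nbrs E y)" "finite (nbrs E x)" and x_in: "x \<in> nbrs E y"
    using nbrs_finite_nonempty[OF xy] adj_sym[OF xy] by auto
  have pos: "0 < card (nbrs E y)"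
    using fin(1) x_in card_gt_0_iff by blast
  have "(\<Sum>v\<in>nbrs E y. g v) = g x + (\<Sum>v\<in>nbrs E y - {x}. 2)"
    using sum.remove[OF fin(1) x_in, of g] by (simp add: g_def)
  also have "\<dots> = 2 * real (card (nbrs E y)) - 1"
    using fin(1) x_in pos by (simp add: g_def of_nat_diff)
  finally have "(\<Sum>v\<in>nbrs E y. g v) / card (nbrs E y) = 2 - 1 / card (nbrs E y)"
    using pos by (simp add: field_simps)
  moreover have "(\<Sum>u\<in>nbrs E x. h u) = 1"
    using fin(2) xy by (simp add: h_def)
  ultimately show ?thesis
    using dual by simp
qed

lemma W1_gt_1_if_large_degrees:
  assumes xy: "E x y" and tf: "triangle_free E" and qf: "quadrilateral_free E"
    and deg: "card (nbrs E x) \<ge> 2" "card (nbrs E y) \<ge> 2"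
    and not_22: "\<not> (card (nbrs E x) = 2 \<and> card (nbrs E y) = 2)"
  shows "W1 E x y > 1"
proof -
  have "1 / card (nbrs E y) + 1 / card (nbrs E x) < (1::real)"
  proof (cases "card (nbrs E x) \<ge> 3")
    case True
    then have "1 / card (nbrs E y) \<le> (1/2::real)" "1 / card (nbrs E x) \<le> (1/3::real)"
      using deg by (simp_all add: field_simps)
    then show ?thesis by linarith
  next
    case False
    then have "1 / card (nbrs E y) \<le> (1/3::real)" "1 / card (nbrs E x) \<le> (1/2::real)"
      using deg not_22 by (simp_all add: field_simps)
    then show ?thesis by linarith
  qed
  then show ?thesis
    using W1_ge_2_minus_inverse_degrees[OF xy tf qf] by linarith
qed

lemma ricci_flat_iff_edges_leaf_or_deg2:
  assumes tf: "triangle_free E" and qf: "quadrilateral_free E"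
  shows "ricci_flat V E \<longleftrightarrow> edges_leaf_or_deg2 E"
proof
  assume flat: "ricci_flat V E"
  show "edges_leaf_or_deg2 E"
    unfolding edges_leaf_or_deg2_def
  proof (intro allI impI)
    fix x y assume xy: "E x y"
    have "x \<in> V" "y \<in> V"
      using xy adj_sym[OF xy] by (auto intro: adj_in_V)
    then have "W1 E x y = 1" "1 \<le> card (nbrs E x)" "1 \<le> card (nbrs E y)"
      using flat xy card_nbrs_ge_1 unfolding ricci_flat_def kappa_def by auto
    then show "card (nbrs E x) = 1 \<or> card (nbrs E y) = 1 \<or>
        (card (nbrs E x) = 2 \<and> card (nbrs E y) = 2)"
      using W1_gt_1_if_large_degrees[OF xy tf qf] by linarith
  qed
next
  assume deg: "edges_leaf_or_deg2 E"
  have "W1 E x y = 1" if xy: "E x y" for x y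
    using deg xy W1_eq_1_if_leaf[OF xy] W1_eq_1_if_deg2[OF xy tf]
    unfolding edges_leaf_or_deg2_def by blast
  then show "ricci_flat V E"
    unfolding ricci_flat_def kappa_def by simp
qed

end

subsection \<open>Girth at least five\<close>

lemma girth_le_cycle_length: "is_cycle V E xs \<Longrightarrow> girth V E \<le> enat (length xs)"
  unfolding girth_def by (auto intro: Inf_lower)

lemma short_cycle_free_if_girth_ge_5:
  assumes G: "graph V E" and g: "5 \<le> girth V E"
  shows "triangle_free E" and "quadrilateral_free E"
proof -
  have long: "5 \<le> length xs" if "is_cycle V E xs" for xs
  proof -
    have "enat 5 \<le> enat (length xs)"
      using g girth_le_cycle_length[OF that] by (metis numeral_eq_enat order_trans)
    then show ?thesis
      by simp
  qed
  show "triangle_free E"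
    unfolding triangle_free_def
  proof (intro allI impI notI)
    fix x y z assume "E x y" "E y z" "E z x"
    then have "is_cycle V E [x, y, z]"
      unfolding is_cycle_def using graphD[OF G] by auto
    then show False
      using long by fastforce
  qed
  show "quadrilateral_free E"
    unfolding quadrilateral_free_def
  proof (intro allI impI; rule ccontr)
    fix a b c d assume "E a b" "E b c" "E c d" "E d a" "\<not> (a = c \<or> b = d)"
    then have "is_cycle V E [a, b, c, d]"
      unfolding is_cycle_def using graphD[OF G] by auto
    then show False
      using long by fastforce
  qed
qed

lemma girth_ge_5_if_short_cycle_free:
  assumes tf: "triangle_free E" and qf: "quadrilateral_free E"
  shows "5 \<le> girth V E"
  unfolding girth_def
proof (rule Inf_greatest, clarify)
  fix xs assume c: "is_cycle V E xs"
  have "length xs \<noteq> 3"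
  proof
    assume "length xs = 3"
    then obtain p q r where "xs = [p, q, r]"
      by (auto simp: numeral_3_eq_3 length_Suc_conv)
    then show False
      using c tf unfolding is_cycle_def triangle_free_def by auto
  qed
  moreover have "length xs \<noteq> 4"
  proof
    assume "length xs = 4"
    then obtain p q r s where "xs = [p, q, r, s]"
      by (auto simp: numeral_eq_Suc length_Suc_conv)
    then show False
      using c qf unfolding is_cycle_def quadrilateral_free_def by auto
  qed
  ultimately show "5 \<le> enat (length xs)"
    using c unfolding is_cycle_def by (simp add: numeral_eq_enat)
qed

subsection \<open>The model graphs\<close>

lemma card_nbrs_graph_iso:
  assumes bij: "bij_betw f V W" and adj: "\<forall>x\<in>V. \<forall>y\<in>V. E x y \<longleftrightarrow> F (f x) (f y)"
    and G: "graph V E" and H: "graph W F" and x: "x \<in> V"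
  shows "card (nbrs F (f x)) = card (nbrs E x)"
proof -
  have "f ` nbrs E x = nbrs F (f x)"
  proof
    show "f ` nbrs E x \<subseteq> nbrs F (f x)"
    proof
      fix w assume "w \<in> f ` nbrs E x"
      then obtain u where "E x u" "w = f u"
        by auto
      then show "w \<in> nbrs F (f x)"
        using adj x graphD(2)[OF G \<open>E x u\<close>] by simp
    qed
    show "nbrs F (f x) \<subseteq> f ` nbrs E x"
    proof
      fix w assume "w \<in> nbrs F (f x)"
      then have w: "F (f x) w"
        by simp
      then have "w \<in> f ` V"
        using graphD(2)[OF H w] bij by (simp add: bij_betw_def)
      then obtain u where u: "u \<in> V" "w = f u"
        by blast
      then show "w \<in> f ` nbrs E x"
        using adj x w by auto
    qed
  qed
  moreover have "nbrs E x \<subseteq> V"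
    using graphD(2)[OF G] by auto
  then have "inj_on f (nbrs E x)"
    using bij_betw_imp_inj_on[OF bij] by (rule inj_on_subset[rotated])
  ultimately show ?thesis
    using card_image by metis
qed

lemma graph_iso_transfer:
  assumes iso: "graph_iso V E W F" and G: "graph V E" and H: "graph W F"
  shows "edges_leaf_or_deg2 F \<Longrightarrow> edges_leaf_or_deg2 E"
    and "triangle_free F \<Longrightarrow> triangle_free E"
    and "quadrilateral_free F \<Longrightarrow> quadrilateral_free E"
proof -
  obtain f where bij: "bij_betw f V W" and adj: "\<forall>x\<in>V. \<forall>y\<in>V. E x y \<longleftrightarrow> F (f x) (f y)"
    using iso unfolding graph_iso_def by blast
  have E_F: "F (f x) (f y)" if "E x y" for x y
    using adj that graphD(1,2)[OF G] by blast
  have deg: "card (nbrs F (f x)) = card (nbrs E x)" if "E x y" for x y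
    using card_nbrs_graph_iso[OF bij adj G H] graphD(1)[OF G that] .
  show "edges_leaf_or_deg2 F \<Longrightarrow> edges_leaf_or_deg2 E"
    unfolding edges_leaf_or_deg2_def using E_F deg graphD(3)[OF G] by metis
  show "triangle_free F \<Longrightarrow> triangle_free E"
    unfolding triangle_free_def using E_F by blast
  show "quadrilateral_free F \<Longrightarrow> quadrilateral_free E"
    unfolding quadrilateral_free_def
  proof (intro allI impI)
    fix a b c d
    assume "\<forall>a b c d. F a b \<longrightarrow> F b c \<longrightarrow> F c d \<longrightarrow> F d a \<longrightarrow> a = c \<or> b = d"
      and h: "E a b" "E b c" "E c d" "E d a"
    then have "f a = f c \<or> f b = f d"
      using E_F by blast
    moreover have "a \<in> V" "b \<in> V" "c \<in> V" "d \<in> V"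
      using graphD(1)[OF G] h by blast+
    ultimately show "a = c \<or> b = d"
      using bij_betw_imp_inj_on[OF bij] by (auto dest: inj_onD)
  qed
qed

lemma edges_leaf_or_deg2_if_nbrs_in_pair:
  assumes pair: "\<And>x. nbrs R x \<subseteq> {p x, q x}" and sym: "\<And>x y. R x y \<Longrightarrow> R y x"
  shows "edges_leaf_or_deg2 R"
  unfolding edges_leaf_or_deg2_def
proof (intro allI impI)
  fix x y assume xy: "R x y"
  have deg: "finite (nbrs R z) \<and> card (nbrs R z) \<le> 2" for z
  proof -
    have "card {a, b} \<le> 2" for a b :: 'a
      by (cases "a = b") auto
    then have "card {p z, q z} \<le> 2" .
    then show ?thesis
      using pair[of z] card_mono[of "{p z, q z}" "nbrs R z"] finite_subset[of "nbrs R z" "{p z, q z}"]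
      by (meson finite.emptyI finite.insertI order_trans)
  qed
  have "nbrs R x \<noteq> {}" "nbrs R y \<noteq> {}"
    using xy sym[OF xy] by auto
  then have "1 \<le> card (nbrs R x)" "1 \<le> card (nbrs R y)"
    using deg by (auto simp: Suc_le_eq card_gt_0_iff)
  then show "card (nbrs R x) = 1 \<or> card (nbrs R y) = 1 \<or> (card (nbrs R x) = 2 \<and> card (nbrs R y) = 2)"
    using deg[of x] deg[of y] by linarith
qed

lemma path_model:
  "graph {..<n} (path_E n) \<and> triangle_free (path_E n) \<and> quadrilateral_free (path_E n) \<and>
   edges_leaf_or_deg2 (path_E n)"
  unfolding graph_def triangle_free_def quadrilateral_free_def path_E_def
  by (auto intro!: edges_leaf_or_deg2_if_nbrs_in_pair[of _ "\<lambda>i. i + 1" "\<lambda>i. i - 1"]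
      simp: path_E_def)

lemma ray_model:
  "graph UNIV ray_E \<and> triangle_free ray_E \<and> quadrilateral_free ray_E \<and> edges_leaf_or_deg2 ray_E"
  unfolding graph_def triangle_free_def quadrilateral_free_def ray_E_def
  by (auto intro!: edges_leaf_or_deg2_if_nbrs_in_pair[of _ "\<lambda>i. i + 1" "\<lambda>i. i - 1"]
      simp: ray_E_def)

lemma line_model:
  "graph UNIV line_E \<and> triangle_free line_E \<and> quadrilateral_free line_E \<and> edges_leaf_or_deg2 line_E"
  unfolding graph_def triangle_free_def quadrilateral_free_def line_E_def
  by (auto intro!: edges_leaf_or_deg2_if_nbrs_in_pair[of _ "\<lambda>i. i + 1" "\<lambda>i. i - 1"]
      simp: line_E_def)

lemma cycle_E_iff:
  "cycle_E n i j \<longleftrightarrow> i < n \<and> j < n \<and> i \<noteq> j \<and>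
     (j = (if i + 1 = n then 0 else i + 1) \<or> i = (if j + 1 = n then 0 else j + 1))"
proof -
  have "(k + 1) mod n = (if k + 1 = n then 0 else k + 1)" if "k < n" for k
    using that by (auto simp: Suc_le_eq dest: Suc_leI)
  then show ?thesis
    unfolding cycle_E_def by auto
qed

lemma cycle_model:
  assumes "5 \<le> n"
  shows "graph {..<n} (cycle_E n) \<and> triangle_free (cycle_E n) \<and> quadrilateral_free (cycle_E n) \<and>
    edges_leaf_or_deg2 (cycle_E n)"
  using assms unfolding graph_def triangle_free_def quadrilateral_free_def cycle_E_iff
  by (auto intro!: edges_leaf_or_deg2_if_nbrs_in_pair[of _ "\<lambda>i. if i + 1 = n then 0 else i + 1"
      "\<lambda>i. if i = 0 then n - 1 else i - 1"] simp: cycle_E_iff split: if_splits)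

lemma star_model:
  "graph {..<n} (star_E n) \<and> triangle_free (star_E n) \<and> quadrilateral_free (star_E n) \<and>
   edges_leaf_or_deg2 (star_E n)"
proof -
  have "nbrs (star_E n) j = {0}" if "j \<noteq> 0" "j < n" for j
    using that by (auto simp: star_E_def)
  then have "edges_leaf_or_deg2 (star_E n)"
    unfolding edges_leaf_or_deg2_def star_E_def by auto
  then show ?thesis
    unfolding graph_def triangle_free_def quadrilateral_free_def star_E_def by auto
qed

subsection \<open>Non-backtracking walks\<close>

text \<open>In a graph of maximum degree two a non-backtracking walk is determined by its first edge;
  \<open>nb_walk E u v\<close> is that walk (chosen by \<open>SOME\<close>, so it is only meaningful while the
  current vertex has a neighbour other than the previous one).\<close>

fun nb_walk :: "('a \<Rightarrow> 'a \<Rightarrow> bool) \<Rightarrow> 'a \<Rightarrow> 'a \<Rightarrow> nat \<Rightarrow> 'a" where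
  "nb_walk E u v 0 = u"
| "nb_walk E u v (Suc 0) = v"
| "nb_walk E u v (Suc (Suc k)) = (SOME w. E (nb_walk E u v (Suc k)) w \<and> w \<noteq> nb_walk E u v k)"

definition nonbacktracking :: "('a \<Rightarrow> 'a \<Rightarrow> bool) \<Rightarrow> (nat \<Rightarrow> 'a) \<Rightarrow> nat \<Rightarrow> bool" where
  "nonbacktracking E p k \<longleftrightarrow>
     (\<forall>m<k. E (p m) (p (Suc m))) \<and> (\<forall>m. Suc (Suc m) \<le> k \<longrightarrow> p (Suc (Suc m)) \<noteq> p m)"

lemma first_repetition_exists:
  fixes p :: "nat \<Rightarrow> 'b"
  assumes "\<not> inj p"
  obtains n where "inj_on p {..<n}" and "\<exists>i<n. p i = p n"
proof -
  let ?rep = "\<lambda>j. \<exists>i<j. p i = p j"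
  have "\<exists>j. ?rep j"
    using assms unfolding inj_def by (metis nat_neq_iff)
  then have "?rep (Least ?rep)"
    by (rule LeastI_ex[of ?rep])
  moreover have "inj_on p {..<Least ?rep}"
  proof (rule inj_onI, rule ccontr)
    fix a b assume ab: "a \<in> {..<Least ?rep}" "b \<in> {..<Least ?rep}" "p a = p b" "a \<noteq> b"
    then have "?rep (max a b)"
      by (cases "a < b") (auto simp: max_def intro: exI[of _ a] exI[of _ b])
    then have "Least ?rep \<le> max a b"
      by (rule Least_le[of ?rep])
    then show False
      using ab by simp
  qed
  ultimately show ?thesis
    using that by blast
qed

context lf_graph
begin

lemma nonbacktracking_nb_walk:
  assumes uv: "E u v" and deg: "\<And>m. 1 \<le> m \<Longrightarrow> m < k \<Longrightarrow> card (nbrs E (nb_walk E u v m)) = 2"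
  shows "nonbacktracking E (nb_walk E u v) k"
  using deg
proof (induction k)
  case 0
  then show ?case
    by (simp add: nonbacktracking_def)
next
  case (Suc k)
  let ?p = "nb_walk E u v"
  have IH: "nonbacktracking E ?p k"
    using Suc by simp
  show ?case
  proof (cases k)
    case 0
    then show ?thesis
      using uv by (simp add: nonbacktracking_def)
  next
    fix k' assume k: "k = Suc k'"
    have "card (nbrs E (?p (Suc k'))) = 2"
      by (rule Suc.prems) (use k in auto)
    then obtain w where "E (?p (Suc k')) w" "w \<noteq> ?p k'"
      using card_2_has_other[of "nbrs E (?p (Suc k'))" "?p k'"] by auto
    then have "E (?p (Suc k')) (?p (Suc (Suc k'))) \<and> ?p (Suc (Suc k')) \<noteq> ?p k'"
      using someI[of "\<lambda>w. E (?p (Suc k')) w \<and> w \<noteq> ?p k'" w] by simp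
    then show ?thesis
      using IH k unfolding nonbacktracking_def by (auto simp: less_Suc_eq le_Suc_eq)
  qed
qed

lemma nonbacktracking_in_V:
  assumes "nonbacktracking E p k" "p 0 \<in> V" "m \<le> k"
  shows "p m \<in> V"
  using assms(3)
proof (induction m)
  case 0
  then show ?case
    using assms(2) by simp
next
  case (Suc m)
  then have "E (p m) (p (Suc m))"
    using assms(1) unfolding nonbacktracking_def by simp
  then show ?case
    using adj_sym adj_in_V by blast
qed

lemma nonbacktracking_interior_nbrs:
  assumes p: "nonbacktracking E p k" and i: "1 \<le> i" "i < k" and deg: "card (nbrs E (p i)) = 2"
  shows "nbrs E (p i) = {p (i - 1), p (Suc i)}"
proof (rule card_2_eq_pair[OF deg])
  have "i - 1 < k" "Suc (i - 1) = i"
    using i by auto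
  then have "E (p (i - 1)) (p i)" "E (p i) (p (Suc i))"
    using p i(2) unfolding nonbacktracking_def by metis+
  then show "p (i - 1) \<in> nbrs E (p i)" "p (Suc i) \<in> nbrs E (p i)"
    using adj_sym by auto
  have "Suc (Suc (i - 1)) \<le> k"
    using i by simp
  then have "p (Suc (Suc (i - 1))) \<noteq> p (i - 1)"
    using p unfolding nonbacktracking_def by blast
  then show "p (i - 1) \<noteq> p (Suc i)"
    using i by simp
qed

lemma nonbacktracking_first_repetition:
  assumes p: "nonbacktracking E p k" and deg: "\<And>m. 1 \<le> m \<Longrightarrow> m < k \<Longrightarrow> card (nbrs E (p m)) = 2"
    and jk: "j \<le> k" and inj: "inj_on p {..<j}" and ij: "i < j" and eq: "p j = p i"
  shows "i = 0 \<and> card (nbrs E (p 0)) \<noteq> 1"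
proof -
  have step: "E (p m) (p (Suc m))" if "m < k" for m
    using p that unfolding nonbacktracking_def by blast
  have no_return: "p (Suc (Suc m)) \<noteq> p m" if "Suc (Suc m) \<le> k" for m
    using p that unfolding nonbacktracking_def by blast
  have prev_adj: "p (j - 1) \<in> nbrs E (p i)"
    using step[of "j - 1"] ij jk eq adj_sym by simp
  have j_ne: "j \<noteq> Suc i"
    using prev_adj eq by (auto dest: adj_irrefl)
  have i0: "i = 0"
  proof (rule ccontr)
    assume "i \<noteq> 0"
    then have "nbrs E (p i) = {p (i - 1), p (Suc i)}"
      using nonbacktracking_interior_nbrs[OF p] deg ij jk by simp
    then have "p (j - 1) = p (i - 1) \<or> p (j - 1) = p (Suc i)"
      using prev_adj by simp
    then show False
    proof
      assume "p (j - 1) = p (i - 1)"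
      then have "j - 1 = i - 1"
        using inj_onD[OF inj] ij by simp
      then show False
        using ij \<open>i \<noteq> 0\<close> by simp
    next
      assume "p (j - 1) = p (Suc i)"
      then have "j - 1 = Suc i"
        using inj_onD[OF inj] ij j_ne by simp
      then have "j = Suc (Suc i)"
        by simp
      then show False
        using no_return[of i] jk eq by simp
    qed
  qed
  moreover have "card (nbrs E (p 0)) \<noteq> 1"
  proof
    assume "card (nbrs E (p 0)) = 1"
    moreover have "p 1 \<in> nbrs E (p 0)"
      using step[of 0] ij jk by simp
    ultimately have "nbrs E (p 0) = {p 1}"
      by (rule card_1_eq_singleton)
    then have "p (j - 1) = p 1"
      using prev_adj i0 by simp
    then have "j - 1 = 1"
      using inj_onD[OF inj] ij j_ne i0 by simp
    then have "j = Suc (Suc 0)"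
      by simp
    then show False
      using no_return[of 0] jk eq i0 by simp
  qed
  ultimately show ?thesis ..
qed

lemma closed_nonbacktracking_walk_length_ge_5:
  assumes tf: "triangle_free E" and qf: "quadrilateral_free E"
    and p: "nonbacktracking E p n" and n: "0 < n" and closed: "p n = p 0"
  shows "5 \<le> n"
proof -
  have step: "E (p m) (p (m + 1))" if "m < n" for m
    using p that unfolding nonbacktracking_def by simp
  have no_return: "p (m + 2) \<noteq> p m" if "m + 2 \<le> n" for m
    using p that unfolding nonbacktracking_def by (simp add: numeral_2_eq_2)
  have "n \<noteq> 1"
    using closed step[of 0] by (auto dest: adj_irrefl)
  moreover have "n \<noteq> 2"
  proof
    assume "n = 2"
    then show False
      using closed no_return[of 0] by (simp add: numeral_2_eq_2)
  qed
  moreover have "n \<noteq> 3"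
  proof
    assume "n = 3"
    then have "E (p 0) (p 1)" "E (p 1) (p 2)" "E (p 2) (p 0)"
      using closed step[of 0] step[of 1] step[of 2] by (simp_all add: numeral_2_eq_2 numeral_3_eq_3)
    then show False
      using tf unfolding triangle_free_def by blast
  qed
  moreover have "n \<noteq> 4"
  proof
    assume "n = 4"
    then have "E (p 0) (p 1)" "E (p 1) (p 2)" "E (p 2) (p 3)" "E (p 3) (p 0)"
      and "p 2 \<noteq> p 0" "p 3 \<noteq> p 1"
      using closed step[of 0] step[of 1] step[of 2] step[of 3] no_return[of 0] no_return[of 1]
      by (simp_all add: numeral_eq_Suc)
    then show False
      using qf unfolding quadrilateral_free_def by blast
  qed
  ultimately show ?thesis
    using n by linarith
qed

lemma nonbacktracking_inj_from_leaf:
  assumes p: "nonbacktracking E p k" and deg: "\<And>m. 1 \<le> m \<Longrightarrow> m < k \<Longrightarrow> card (nbrs E (p m)) = 2"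
    and leaf: "card (nbrs E (p 0)) = 1"
  shows "inj_on p {..k}"
proof -
  have "inj_on p {..<j}" if "j \<le> Suc k" for j
    using that
  proof (induction j)
    case (Suc j)
    then have "p j \<notin> p ` {..<j}"
      using nonbacktracking_first_repetition[OF p deg, of j] leaf by fastforce
    then show ?case
      using Suc by (simp add: lessThan_Suc)
  qed simp
  then show ?thesis
    by (simp add: lessThan_Suc_atMost[symmetric])
qed

lemma nonbacktracking_nb_walk_if_regular:
  assumes reg: "\<forall>w\<in>V. card (nbrs E w) = 2" and uv: "E u v"
  shows "nonbacktracking E (nb_walk E u v) k"
proof (induction k)
  case 0
  then show ?case
    by (simp add: nonbacktracking_def)
next
  case (Suc k)
  have "nb_walk E u v m \<in> V" if "m \<le> k" for m
    using nonbacktracking_in_V[OF Suc.IH] adj_in_V[OF uv] that by simp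
  then show ?case
    using reg by (intro nonbacktracking_nb_walk[OF uv]) auto
qed

lemma glued_walk_nonbacktracking:
  fixes s t :: "nat \<Rightarrow> 'a"
  assumes s: "\<And>k. nonbacktracking E s k" and t: "\<And>k. nonbacktracking E t k"
    and start: "s 0 = t 0" and branch: "s 1 \<noteq> t 1"
  defines "g \<equiv> \<lambda>z::int. if 0 \<le> z then s (nat z) else t (nat (- z))"
  shows "E (g z) (g (z + 1))" and "g (z + 2) \<noteq> g z"
proof -
  have g_nonneg: "g z = s (nat z)" if "0 \<le> z" for z
    using that by (simp add: g_def)
  have g_nonpos: "g z = t (nat (- z))" if "z \<le> 0" for z
    using that start by (cases "z = 0") (simp_all add: g_def)
  have s_step: "E (s m) (s (Suc m))" and s_ret: "s (Suc (Suc m)) \<noteq> s m"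
    and t_step: "E (t m) (t (Suc m))" and t_ret: "t (Suc (Suc m)) \<noteq> t m" for m
    using s[of "Suc (Suc m)"] t[of "Suc (Suc m)"] unfolding nonbacktracking_def by auto
  show "E (g z) (g (z + 1))"
  proof (cases "0 \<le> z")
    case True
    then show ?thesis
      using s_step[of "nat z"] by (simp add: g_nonneg nat_add_distrib)
  next
    case False
    then have "nat (- z) = Suc (nat (- (z + 1)))"
      by simp
    then show ?thesis
      using False t_step[of "nat (- (z + 1))"] adj_sym by (simp add: g_nonpos)
  qed
  consider "0 \<le> z" | "z = -1" | "z \<le> -2"
    by linarith
  then show "g (z + 2) \<noteq> g z"
  proof cases
    case 1
    then show ?thesis
      using s_ret[of "nat z"] by (simp add: g_nonneg nat_add_distrib)
  next
    case 2
    then show ?thesis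
      using branch by (simp add: g_def)
  next
    case 3
    then have "nat (- z) = Suc (Suc (nat (- (z + 2))))"
      by simp
    then show ?thesis
      using 3 t_ret[of "nat (- (z + 2))"] by (simp add: g_nonpos)
  qed
qed

end

subsection \<open>Connected graphs described by a parametrisation\<close>

locale connected_lf_graph = lf_graph +
  assumes connected: "connected_graph V E"
begin

lemma nbr_closed_superset:
  assumes u: "u \<in> S" "u \<in> V" and closed: "\<And>x. x \<in> S \<Longrightarrow> nbrs E x \<subseteq> S"
  shows "V \<subseteq> S"
proof
  fix v assume "v \<in> V"
  then obtain xs where xs: "walk E xs" "hd xs = u" "last xs = v"
    using connected u unfolding connected_graph_def by blast
  then have ne: "xs \<noteq> []"
    by (simp add: walk_def)
  have "xs ! i \<in> S" if "i < length xs" for i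
    using that
  proof (induction i)
    case 0
    then show ?case
      using xs(2) u ne by (simp add: hd_conv_nth[symmetric])
  next
    case (Suc i)
    then have "xs ! Suc i \<in> nbrs E (xs ! i)"
      using xs(1) unfolding walk_def by simp
    moreover have "xs ! i \<in> S"
      using Suc by simp
    ultimately show ?case
      using closed by blast
  qed
  then show "v \<in> S"
    using xs(3) ne by (metis last_conv_nth diff_less length_greater_0_conv zero_less_one)
qed

text \<open>The image of \<open>p\<close> is closed under taking neighbours, so by connectedness it is all of \<open>V\<close>.\<close>

lemma graph_iso_if_nbrs_parametrised:
  fixes p :: "'i \<Rightarrow> 'a"
  assumes inj: "inj_on p I" and sub: "p ` I \<subseteq> V" and i0: "i0 \<in> I"
    and nb: "\<And>i. i \<in> I \<Longrightarrow> nbrs E (p i) = p ` {j\<in>I. R i j}"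
  shows "graph_iso V E I R"
proof -
  have "V \<subseteq> p ` I"
    by (rule nbr_closed_superset[of "p i0"]) (use i0 sub nb in auto)
  then have bij: "bij_betw p I V"
    using inj sub by (auto simp: bij_betw_def)
  define f where "f = inv_into I p"
  have bij_f: "bij_betw f V I"
    unfolding f_def using bij by (rule bij_betw_inv_into)
  have f_I: "f x \<in> I" and p_f: "p (f x) = x" if "x \<in> V" for x
    using that bij bij_f unfolding f_def by (auto simp: bij_betw_def f_inv_into_f inv_into_into)
  have "E x y \<longleftrightarrow> R (f x) (f y)" if x: "x \<in> V" and y: "y \<in> V" for x y
  proof -
    have "E x y \<longleftrightarrow> y \<in> nbrs E (p (f x))"
      using p_f[OF x] by simp
    also have "\<dots> \<longleftrightarrow> p (f y) \<in> p ` {j\<in>I. R (f x) j}"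
      using nb[OF f_I[OF x]] p_f[OF y] by simp
    also have "\<dots> \<longleftrightarrow> R (f x) (f y)"
      using inj_on_image_mem_iff[OF inj, of "f y"] f_I[OF y] by auto
    finally show ?thesis .
  qed
  then show ?thesis
    unfolding graph_iso_def using bij_f by blast
qed

subsection \<open>The classification\<close>

lemma graph_iso_star_if_nbrs_leaves:
  assumes v: "v \<in> V" and leaves: "\<And>u. E v u \<Longrightarrow> nbrs E u = {v}"
  shows "graph_iso V E {..<Suc (card (nbrs E v))} (star_E (Suc (card (nbrs E v))))"
proof -
  define N where "N = nbrs E v"
  define k where "k = card N"
  obtain g where g: "bij_betw g {..<k} N"
    using ex_bij_betw_nat_finite[of N] finite_nbrs[OF v] unfolding k_def N_def
    by (auto simp: atLeast0LessThan)
  define p where "p i = (if i = 0 then v else g (i - 1))" for i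
  have p_leaves: "p ` {1..<Suc k} = N"
  proof -
    have "p ` {1..<Suc k} = g ` (\<lambda>i. i - 1) ` {1..<Suc k}"
      by (auto simp: p_def image_image)
    also have "(\<lambda>i. i - 1) ` {1..<Suc k} = {..<k}"
      by (auto simp: image_iff intro!: bexI[of _ "Suc _"])
    finally show ?thesis
      using g by (simp add: bij_betw_def)
  qed
  have dom: "{..<Suc k} = insert 0 {1..<Suc k}"
    by auto
  have "inj_on p {1..<Suc k}"
  proof (rule inj_onI)
    fix i j assume ij: "i \<in> {1..<Suc k}" "j \<in> {1..<Suc k}" "p i = p j"
    then have "g (i - 1) = g (j - 1)"
      by (simp add: p_def)
    then show "i = j"
      using g ij by (auto simp: bij_betw_def dest: inj_onD)
  qed
  moreover have "v \<notin> N"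
    by (auto simp: N_def dest: adj_irrefl)
  ultimately have inj: "inj_on p {..<Suc k}"
    unfolding dom using p_leaves by (simp add: p_def)
  have nb: "nbrs E (p i) = p ` {j\<in>{..<Suc k}. star_E (Suc k) i j}" if "i \<in> {..<Suc k}" for i
  proof (cases "i = 0")
    case True
    then have "{j\<in>{..<Suc k}. star_E (Suc k) i j} = {1..<Suc k}"
      by (auto simp: star_E_def)
    then show ?thesis
      using True p_leaves by (simp add: p_def N_def)
  next
    case False
    then have "{j\<in>{..<Suc k}. star_E (Suc k) i j} = {0}" and "p i \<in> N"
      using that p_leaves by (auto simp: star_E_def)
    then show ?thesis
      using leaves by (simp add: p_def N_def)
  qed
  have "p ` {..<Suc k} \<subseteq> V"
    unfolding dom image_insert p_leaves using v nbrs_subset_V by (simp add: p_def N_def)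
  then show ?thesis
    using inj nb unfolding k_def N_def by (intro graph_iso_if_nbrs_parametrised[of p _ 0]) auto
qed

text \<open>A vertex of degree \<open>\<ge> 3\<close> forces all its neighbours to be leaves.\<close>

lemma graph_iso_star_if_high_degree:
  assumes deg: "edges_leaf_or_deg2 E" and v: "v \<in> V" and high: "3 \<le> card (nbrs E v)"
  shows "\<exists>n\<ge>3. graph_iso V E {..<n} (star_E n)"
proof -
  have "nbrs E u = {v}" if "E v u" for u
  proof (rule card_1_eq_singleton)
    show "card (nbrs E u) = 1"
      using deg that high unfolding edges_leaf_or_deg2_def by fastforce
    show "v \<in> nbrs E u"
      using that adj_sym by simp
  qed
  then show ?thesis
    using graph_iso_star_if_nbrs_leaves[OF v] high by (intro exI[of _ "Suc (card (nbrs E v))"]) simp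
qed

lemma graph_iso_path_if_leaf_to_leaf:
  assumes p: "nonbacktracking E p n" and n: "1 \<le> n" and p0: "p 0 \<in> V"
    and deg: "\<And>m. 1 \<le> m \<Longrightarrow> m < n \<Longrightarrow> card (nbrs E (p m)) = 2"
    and leaf0: "card (nbrs E (p 0)) = 1" and leafn: "card (nbrs E (p n)) = 1"
  shows "graph_iso V E {..<Suc n} (path_E (Suc n))"
proof (rule graph_iso_if_nbrs_parametrised[of p _ 0])
  show "inj_on p {..<Suc n}"
    using nonbacktracking_inj_from_leaf[OF p deg leaf0] by (simp add: lessThan_Suc_atMost)
  show "p ` {..<Suc n} \<subseteq> V"
    using nonbacktracking_in_V[OF p p0] by auto
  have step: "E (p m) (p (Suc m))" if "m < n" for m
    using p that unfolding nonbacktracking_def by blast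
  fix i assume "i \<in> {..<Suc n}"
  then consider "i = 0" | "i = n" | "0 < i" "i < n"
    by fastforce
  then show "nbrs E (p i) = p ` {j\<in>{..<Suc n}. path_E (Suc n) i j}"
  proof cases
    case 1
    then have "{j\<in>{..<Suc n}. path_E (Suc n) i j} = {1}"
      using n by (auto simp: path_E_def)
    then show ?thesis
      using 1 leaf_nbrs[OF leaf0 step[of 0]] n by simp
  next
    case 2
    then have "{j\<in>{..<Suc n}. path_E (Suc n) i j} = {n - 1}"
      using n by (auto simp: path_E_def)
    moreover have "E (p n) (p (n - 1))"
      using step[of "n - 1"] n adj_sym by simp
    ultimately show ?thesis
      using 2 leaf_nbrs[OF leafn] by simp
  next
    case 3
    then have "{j\<in>{..<Suc n}. path_E (Suc n) i j} = {i - 1, Suc i}"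
      by (auto simp: path_E_def)
    then show ?thesis
      using nonbacktracking_interior_nbrs[OF p _ _ deg] 3 by simp
  qed
qed simp

lemma graph_iso_ray_if_leaf:
  assumes p: "\<And>k. nonbacktracking E p k" and p0: "p 0 \<in> V"
    and deg: "\<And>m. 1 \<le> m \<Longrightarrow> card (nbrs E (p m)) = 2" and leaf0: "card (nbrs E (p 0)) = 1"
  shows "graph_iso V E (UNIV :: nat set) ray_E"
proof (rule graph_iso_if_nbrs_parametrised[of p _ 0])
  show "inj_on p UNIV"
  proof (rule inj_onI)
    fix i j assume "p i = p j"
    moreover have "inj_on p {..max i j}"
      using nonbacktracking_inj_from_leaf[OF p deg leaf0] by blast
    ultimately show "i = j"
      by (auto dest: inj_onD)
  qed
  show "p ` UNIV \<subseteq> V"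
    using nonbacktracking_in_V[OF p p0] by auto
  fix i :: nat
  show "nbrs E (p i) = p ` {j\<in>UNIV. ray_E i j}"
  proof (cases "i = 0")
    case True
    have "E (p 0) (p 1)"
      using p[of 1] unfolding nonbacktracking_def by simp
    moreover have "{j\<in>UNIV. ray_E i j} = {1}"
      using True by (auto simp: ray_E_def)
    ultimately show ?thesis
      using True leaf_nbrs[OF leaf0] by simp
  next
    case False
    then have "{j\<in>UNIV. ray_E i j} = {i - 1, Suc i}"
      by (auto simp: ray_E_def)
    then show ?thesis
      using nonbacktracking_interior_nbrs[OF p[of "Suc i"]] deg False by simp
  qed
qed simp

text \<open>Starting at a leaf of a graph of maximum degree two, the non-backtracking walk either
  reaches a second leaf (a path) or runs forever through vertices of degree two (a ray).\<close>

lemma graph_iso_path_or_ray_if_leaf: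
  assumes max2: "\<forall>w\<in>V. card (nbrs E w) \<le> 2" and u: "u \<in> V" and leaf: "card (nbrs E u) = 1"
  shows "(\<exists>n\<ge>2. graph_iso V E {..<n} (path_E n)) \<or> graph_iso V E (UNIV :: nat set) ray_E"
proof -
  obtain v where uv: "E u v"
    using leaf by (metis card_1_singletonE in_nbrs_iff insertI1)
  define p where "p = nb_walk E u v"
  have p0: "p 0 = u"
    by (simp add: p_def)
  show ?thesis
  proof (cases "\<exists>k. 1 \<le> k \<and> card (nbrs E (p k)) \<noteq> 2")
    case True
    define n where "n = (LEAST k. 1 \<le> k \<and> card (nbrs E (p k)) \<noteq> 2)"
    have n: "1 \<le> n" "card (nbrs E (p n)) \<noteq> 2"
      using LeastI_ex[OF True] unfolding n_def by blast+
    have deg: "card (nbrs E (p m)) = 2" if "1 \<le> m" "m < n" for m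
      using not_less_Least[of m "\<lambda>k. 1 \<le> k \<and> card (nbrs E (p k)) \<noteq> 2"] that unfolding n_def by blast
    have walk: "nonbacktracking E p n"
      unfolding p_def using deg by (intro nonbacktracking_nb_walk[OF uv]) (auto simp: p_def)
    have "p n \<in> V"
      using nonbacktracking_in_V[OF walk] u p0 by simp
    then have "card (nbrs E (p n)) = 1"
      using card_nbrs_ge_1 max2 n(2) by fastforce
    then have "graph_iso V E {..<Suc n} (path_E (Suc n))"
      using graph_iso_path_if_leaf_to_leaf[OF walk n(1)] u p0 deg leaf by simp
    then show ?thesis
      using n(1) by (intro disjI1 exI[of _ "Suc n"]) simp
  next
    case False
    then have deg: "card (nbrs E (p m)) = 2" if "1 \<le> m" for m
      using that by blast
    have "nonbacktracking E p k" for k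
      unfolding p_def using deg by (intro nonbacktracking_nb_walk[OF uv]) (auto simp: p_def)
    then show ?thesis
      using graph_iso_ray_if_leaf deg leaf u p0 by auto
  qed
qed

text \<open>The first repeated vertex of the walk is its starting point, so the walk closes up into a cycle.\<close>

lemma graph_iso_cycle_if_not_inj:
  assumes tf: "triangle_free E" and qf: "quadrilateral_free E"
    and reg: "\<forall>w\<in>V. card (nbrs E w) = 2"
    and p: "\<And>k. nonbacktracking E p k" and pV: "\<And>m. p m \<in> V" and not_inj: "\<not> inj p"
  shows "\<exists>n\<ge>5. graph_iso V E {..<n} (cycle_E n)"
proof -
  have deg: "card (nbrs E (p m)) = 2" for m
    using reg pV by blast
  obtain n where inj: "inj_on p {..<n}" and "\<exists>i<n. p i = p n"
    using not_inj by (rule first_repetition_exists)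
  then obtain i where i: "i < n" "p i = p n"
    by blast
  have "i = 0"
    using nonbacktracking_first_repetition[OF p deg _ inj i(1) i(2)[symmetric]] by blast
  then have closed: "p n = p 0"
    using i by simp
  have n5: "5 \<le> n"
    using closed_nonbacktracking_walk_length_ge_5[OF tf qf p] closed i by simp
  have step: "E (p m) (p (Suc m))" for m
    using p[of "Suc m"] unfolding nonbacktracking_def by blast
  have nb: "nbrs E (p i) = p ` {m\<in>{..<n}. cycle_E n i m}" if i: "i \<in> {..<n}" for i
  proof -
    have idx: "{m\<in>{..<n}. cycle_E n i m} = {if i = 0 then n - 1 else i - 1, if Suc i = n then 0 else Suc i}"
      using n5 i by (auto simp: cycle_E_iff split: if_splits)
    show ?thesis
    proof (cases "i = 0")
      case True
      have "E (p 0) (p (n - 1))"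
        using step[of "n - 1"] closed n5 adj_sym by (simp add: Suc_diff_le)
      moreover have "p (n - 1) \<noteq> p 1"
        using inj_onD[OF inj, of "n - 1" 1] n5 by auto
      ultimately have "nbrs E (p 0) = {p (n - 1), p 1}"
        using step[of 0] deg[of 0] by (intro card_2_eq_pair) auto
      then show ?thesis
        using idx True n5 by simp
    next
      case False
      have "p (if Suc i = n then 0 else Suc i) = p (Suc i)"
        using closed by simp
      then show ?thesis
        using idx False nonbacktracking_interior_nbrs[OF p[of "Suc i"] _ _ deg] by simp
    qed
  qed
  have "graph_iso V E {..<n} (cycle_E n)"
    using inj pV nb n5 by (intro graph_iso_if_nbrs_parametrised[of p _ 0]) auto
  then show ?thesis
    using n5 by blast
qed

lemma inj_if_nonbacktracking_infinite:
  assumes tf: "triangle_free E" and qf: "quadrilateral_free E"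
    and reg: "\<forall>w\<in>V. card (nbrs E w) = 2" and inf: "infinite V"
    and p: "\<And>k. nonbacktracking E p k" and pV: "\<And>m. p m \<in> V"
  shows "inj p"
proof (rule ccontr)
  assume "\<not> inj p"
  then obtain n where "graph_iso V E {..<n} (cycle_E n)"
    using graph_iso_cycle_if_not_inj[OF tf qf reg p pV] by blast
  then have "finite V"
    unfolding graph_iso_def using bij_betw_finite by blast
  then show False
    using inf by simp
qed

text \<open>A two-sided non-backtracking walk in an infinite graph is injective, because each of its
  shifts to a one-sided walk is.\<close>

lemma graph_iso_line_if_two_sided_walk:
  fixes g :: "int \<Rightarrow> 'a"
  assumes tf: "triangle_free E" and qf: "quadrilateral_free E"
    and reg: "\<forall>w\<in>V. card (nbrs E w) = 2" and inf: "infinite V"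
    and gV: "\<And>z. g z \<in> V" and step: "\<And>z. E (g z) (g (z + 1))" and no_return: "\<And>z. g (z + 2) \<noteq> g z"
  shows "graph_iso V E (UNIV :: int set) line_E"
proof (rule graph_iso_if_nbrs_parametrised[of g _ 0])
  have shift_inj: "inj (\<lambda>m. g (int m - int k))" for k
  proof (rule inj_if_nonbacktracking_infinite[OF tf qf reg inf])
    have "int (Suc m) - int k = (int m - int k) + 1" "int (Suc (Suc m)) - int k = (int m - int k) + 2"
      for m
      by simp_all
    then show "nonbacktracking E (\<lambda>m. g (int m - int k)) n" for n
      unfolding nonbacktracking_def using step no_return by presburger
  qed (rule gV)
  show "inj_on g UNIV"
  proof (rule injI)
    fix x y assume "g x = g y"
    define k where "k = nat (\<bar>x\<bar> + \<bar>y\<bar>)"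
    have "0 \<le> x + int k" "0 \<le> y + int k"
      by (simp_all add: k_def)
    then have "g (int (nat (x + int k)) - int k) = g (int (nat (y + int k)) - int k)"
      using \<open>g x = g y\<close> by simp
    then have "nat (x + int k) = nat (y + int k)"
      by (rule injD[OF shift_inj])
    then show "x = y"
      using \<open>0 \<le> x + int k\<close> \<open>0 \<le> y + int k\<close> by simp
  qed
  show "g ` UNIV \<subseteq> V"
    using gV by auto
  fix z :: int
  have "{w\<in>UNIV. line_E z w} = {z - 1, z + 1}"
    by (auto simp: line_E_def)
  moreover have "nbrs E (g z) = {g (z - 1), g (z + 1)}"
  proof (rule card_2_eq_pair)
    show "card (nbrs E (g z)) = 2"
      using reg gV by blast
    show "g (z - 1) \<in> nbrs E (g z)" "g (z + 1) \<in> nbrs E (g z)"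
      using step[of "z - 1"] step[of z] adj_sym by auto
    show "g (z - 1) \<noteq> g (z + 1)"
      using no_return[of "z - 1"] by (simp add: algebra_simps)
  qed
  ultimately show "nbrs E (g z) = g ` {w\<in>UNIV. line_E z w}"
    by simp
qed simp

text \<open>If the walk from \<open>v\<^sub>0\<close> through one neighbour never repeats a vertex, the graph is
  infinite, and the walks through the two neighbours of \<open>v\<^sub>0\<close> glue to a two-sided walk.\<close>

lemma graph_iso_cycle_or_line_if_regular:
  assumes tf: "triangle_free E" and qf: "quadrilateral_free E"
    and reg: "\<forall>w\<in>V. card (nbrs E w) = 2"
  shows "(\<exists>n\<ge>5. graph_iso V E {..<n} (cycle_E n)) \<or> graph_iso V E (UNIV :: int set) line_E"
proof -
  obtain v0 where v0: "v0 \<in> V"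
    using connected unfolding connected_graph_def by blast
  obtain a b where ab: "nbrs E v0 = {a, b}" "a \<noteq> b"
    using reg v0 card_2_iff by metis
  have ea: "E v0 a" and eb: "E v0 b"
    using ab(1) by (metis in_nbrs_iff insertI1 insertI2)+
  define s where "s = nb_walk E v0 a"
  define t where "t = nb_walk E v0 b"
  have s: "nonbacktracking E s k" and t: "nonbacktracking E t k" for k
    unfolding s_def t_def using nonbacktracking_nb_walk_if_regular[OF reg] ea eb by blast+
  have sV: "s m \<in> V" and tV: "t m \<in> V" for m
    using nonbacktracking_in_V[OF s, of m m] nonbacktracking_in_V[OF t, of m m] v0
    by (simp_all add: s_def t_def)
  show ?thesis
  proof (cases "inj s")
    case False
    then show ?thesis
      using graph_iso_cycle_if_not_inj[OF tf qf reg s sV] by blast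
  next
    case True
    then have "infinite V"
      using sV range_inj_infinite[OF True] finite_subset[of "range s" V] by blast
    moreover have "s 0 = t 0" "s 1 \<noteq> t 1"
      using ab(2) by (simp_all add: s_def t_def)
    ultimately have "graph_iso V E UNIV line_E"
      using glued_walk_nonbacktracking[OF s t] sV tV
      by (intro graph_iso_line_if_two_sided_walk[OF tf qf reg,
            where g = "\<lambda>z. if 0 \<le> z then s (nat z) else t (nat (- z))"]) auto
    then show ?thesis
      by blast
  qed
qed

lemma graph_iso_model_if_local_conditions:
  assumes tf: "triangle_free E" and qf: "quadrilateral_free E" and deg: "edges_leaf_or_deg2 E"
  shows "(\<exists>n\<ge>2. graph_iso V E {..<n} (path_E n)) \<or>
    graph_iso V E (UNIV :: nat set) ray_E \<or>
    graph_iso V E (UNIV :: int set) line_E \<or>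
    (\<exists>n\<ge>5. graph_iso V E {..<n} (cycle_E n)) \<or>
    (\<exists>n\<ge>3. graph_iso V E {..<n} (star_E n))"
proof (cases "\<exists>v\<in>V. 3 \<le> card (nbrs E v)")
  case True
  then show ?thesis
    using graph_iso_star_if_high_degree[OF deg] by blast
next
  case False
  then have max2: "\<forall>w\<in>V. card (nbrs E w) \<le> 2"
    by force
  show ?thesis
  proof (cases "\<exists>u\<in>V. card (nbrs E u) = 1")
    case True
    then show ?thesis
      using graph_iso_path_or_ray_if_leaf[OF max2] by blast
  next
    case False
    then have "\<forall>w\<in>V. card (nbrs E w) = 2"
      using max2 card_nbrs_ge_1 by force
    then show ?thesis
      using graph_iso_cycle_or_line_if_regular[OF tf qf] by blast
  qed
qed

end

lemma local_conditions_if_graph_iso_model: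
  assumes G: "graph V E"
    and "(\<exists>n\<ge>2. graph_iso V E {..<n} (path_E n)) \<or>
      graph_iso V E (UNIV :: nat set) ray_E \<or>
      graph_iso V E (UNIV :: int set) line_E \<or>
      (\<exists>n\<ge>5. graph_iso V E {..<n} (cycle_E n)) \<or>
      (\<exists>n\<ge>3. graph_iso V E {..<n} (star_E n))"
  shows "triangle_free E \<and> quadrilateral_free E \<and> edges_leaf_or_deg2 E"
  using assms(2)
proof (elim disjE exE conjE)
  fix n assume "graph_iso V E {..<n} (path_E n)"
  then show ?thesis
    using graph_iso_transfer[OF _ G] path_model by blast
next
  assume "graph_iso V E (UNIV :: nat set) ray_E"
  then show ?thesis
    using graph_iso_transfer[OF _ G] ray_model by blast
next
  assume "graph_iso V E (UNIV :: int set) line_E"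
  then show ?thesis
    using graph_iso_transfer[OF _ G] line_model by blast
next
  fix n assume "5 \<le> n" "graph_iso V E {..<n} (cycle_E n)"
  then show ?thesis
    using graph_iso_transfer[OF _ G] cycle_model by blast
next
  fix n assume "graph_iso V E {..<n} (star_E n)"
  then show ?thesis
    using graph_iso_transfer[OF _ G] star_model by blast
qed

theorem corollary3p4:
  fixes V :: "'a set" and E :: "'a \<Rightarrow> 'a \<Rightarrow> bool"
  assumes "graph V E" and "locally_finite V E" and "connected_graph V E"
    and "\<forall>v\<in>V. nbrs E v \<noteq> {}"
  shows "(ricci_flat V E \<and> girth V E \<ge> 5) \<longleftrightarrow>
     ((\<exists>n\<ge>2. graph_iso V E {..<n} (path_E n)) \<or>
      graph_iso V E (UNIV :: nat set) ray_E \<or>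
      graph_iso V E (UNIV :: int set) line_E \<or>
      (\<exists>n\<ge>5. graph_iso V E {..<n} (cycle_E n)) \<or>
      (\<exists>n\<ge>3. graph_iso V E {..<n} (star_E n)))"
proof -
  interpret connected_lf_graph V E
    using assms by unfold_locales
  have "ricci_flat V E \<and> 5 \<le> girth V E \<longleftrightarrow>
      triangle_free E \<and> quadrilateral_free E \<and> edges_leaf_or_deg2 E"
    using short_cycle_free_if_girth_ge_5[OF assms(1)] girth_ge_5_if_short_cycle_free
      ricci_flat_iff_edges_leaf_or_deg2 by blast
  then show ?thesis
    using graph_iso_model_if_local_conditions local_conditions_if_graph_iso_model[OF assms(1)] by blast
qed

end
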